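(* Let $n\ge 1$, let $C$ be a convex subset of $\mathbb{R}^n$, let $M$ be a smooth manifold, and let $f:\mathbb{R}^n\to M$ be a differentiable function. If $\mathrm{Sens}_C(f)=S_n$, then $f$ is one-to-one on $C$.
   Context: Sign of a real number: $\mathrm{sgn}(x)=+1,0,-1$ according as $x>0$, $x=0$, $x<0$. For $g:\mathbb{R}^n\to\mathbb{R}$ and a nonempty $C\subseteq\mathbb{R}^n$, define $\mathrm{sign}_C(g)=+1$ if $g(c)>0$ for all $c\in C$; $0$ if $g(c)=0$ for all $c\in C$; $-1$ if $g(c)<0$ for all $c\in C$; and $u$ (a formal symbol) otherwise. If $g$ is differentiable on $C$, its total sign over $C$ is the tuple $\mathrm{Sign}_C(g)=\big(\mathrm{sign}_C(\partial g/\partial x_1),\dots,\mathrm{sign}_C(\partial g/\partial x_n)\big)\in\{1,0,-1,u\}^n$. $S_n$ denotes the set of all nonzero $n$-tuples $s=(s_1,\dots,s_n)\in\{-1,0,1\}^n$ whose first nonzero entry equals $1$. A tuple $t=(t_1,\dots,t_n)\in\{1,0,-1,u\}^n$ eliminates $s\in S_n$ if: (i) $t_i\neq0$ and $s_i\neq0$ for some $i$; (ii) there is $k\in\{+1,-1\}$ with $t_i=k s_i$ for all $i$ such that $s_i\neq 0$ and $t_i\neq0$; (iii) $s_i=0$ whenever $t_i=u$. For a smooth manifold $M$, a convex $C\subseteq\mathbb{R}^n$ and a differentiable $f:\mathbb{R}^n\to M$, $\mathrm{Sens}_C(f)$ is the set of all $v\in S_n$ for which there exists a differentiable function $\pi:M\to\mathbb{R}$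 such that $\mathrm{Sign}_C(\pi\circ f)$ eliminates $v$. *)

theory Defs
  imports "HOL-Analysis.Analysis"
begin

fun iter_dderiv :: "'a::real_normed_vector list \<Rightarrow> ('a \<Rightarrow> 'b::real_normed_vector) \<Rightarrow> 'a \<Rightarrow> 'b" where
  "iter_dderiv [] g = g"
| "iter_dderiv (v # vs) g = (\<lambda>x. frechet_derivative (iter_dderiv vs g) (at x) v)"

definition smooth_on :: "'a::real_normed_vector set \<Rightarrow> ('a \<Rightarrow> 'b::real_normed_vector) \<Rightarrow> bool" where
  "smooth_on U g \<longleftrightarrow> (\<forall>vs. iter_dderiv vs g differentiable_on U)"

text \<open>The manifold carrier is the whole
  type 'm, which is assumed Hausdorff and second countable.\<close>
definition smooth_atlas ::
  "('m::{t2_space,second_countable_topology} set \<times> ('m \<Rightarrow> 'e::euclidean_space)) set \<Rightarrow> bool" where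
  "smooth_atlas A \<longleftrightarrow>
     (\<Union>(fst ` A) = UNIV) \<and>
     (\<forall>(U, \<phi>) \<in> A. open U \<and> open (\<phi> ` U) \<and> homeomorphism U (\<phi> ` U) \<phi> (inv_into U \<phi>)) \<and>
     (\<forall>(U, \<phi>) \<in> A. \<forall>(V, \<psi>) \<in> A. smooth_on (\<phi> ` (U \<inter> V)) (\<psi> \<circ> inv_into U \<phi>))"

definition diff_into_mfd ::
  "('m::topological_space set \<times> ('m \<Rightarrow> 'e::euclidean_space)) set \<Rightarrow> ('x::euclidean_space \<Rightarrow> 'm) \<Rightarrow> bool" where
  "diff_into_mfd A f \<longleftrightarrow> continuous_on UNIV f \<and>
     (\<forall>(U, \<phi>) \<in> A. \<forall>x. f x \<in> U \<longrightarrow> (\<phi> \<circ> f) differentiable (at x))"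

definition diff_on_mfd ::
  "('m::topological_space set \<times> ('m \<Rightarrow> 'e::euclidean_space)) set \<Rightarrow> ('m \<Rightarrow> real) \<Rightarrow> bool" where
  "diff_on_mfd A p \<longleftrightarrow> continuous_on UNIV p \<and>
     (\<forall>(U, \<phi>) \<in> A. (p \<circ> inv_into U \<phi>) differentiable_on (\<phi> ` U))"

datatype sgnu = Pos | Zero | Neg | U

definition sgnu_of_int :: "int \<Rightarrow> sgnu" where
  "sgnu_of_int k = (if k > 0 then Pos else if k = 0 then Zero else Neg)"

definition sign_on :: "'a set \<Rightarrow> ('a \<Rightarrow> real) \<Rightarrow> sgnu" where
  "sign_on C g = (if \<forall>c\<in>C. g c > 0 then Pos
                  else if \<forall>c\<in>C. g c = 0 then Zero
                  else if \<forall>c\<in>C. g c < 0 then Neg else U)"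

definition partial :: "(real^'n \<Rightarrow> real) \<Rightarrow> 'n \<Rightarrow> real^'n \<Rightarrow> real" where
  "partial g i c = frechet_derivative g (at c) (axis i 1)"

definition total_sign :: "(real^'n) set \<Rightarrow> (real^'n \<Rightarrow> real) \<Rightarrow> 'n \<Rightarrow> sgnu" where
  "total_sign C g = (\<lambda>i. sign_on C (partial g i))"

text \<open>S_n: nonzero tuples in {-1,0,1}^n whose first nonzero entry is 1 (coordinates ordered by
  the linear order of the finite index type 'n, e.g. 1 < 2 < ... < n for numeral types).\<close>
definition S_set :: "(('n::{finite,linorder}) \<Rightarrow> int) set" where
  "S_set = {s. (\<forall>i. s i \<in> {-1,0,1}) \<and> (\<exists>i. s i \<noteq> 0) \<and>
               (\<forall>i. s i \<noteq> 0 \<and> (\<forall>j. s j \<noteq> 0 \<longrightarrow> i \<le> j) \<longrightarrow> s i = 1)}"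

definition eliminates :: "('n \<Rightarrow> sgnu) \<Rightarrow> ('n \<Rightarrow> int) \<Rightarrow> bool" where
  "eliminates t s \<longleftrightarrow>
     (\<exists>i. t i \<noteq> Zero \<and> s i \<noteq> 0) \<and>
     (\<exists>k\<in>{1, -1::int}. \<forall>i. s i \<noteq> 0 \<and> t i \<noteq> Zero \<longrightarrow> t i = sgnu_of_int (k * s i)) \<and>
     (\<forall>i. t i = U \<longrightarrow> s i = 0)"

text \<open>Sens_C(f).  The total sign of pi o f over C is only defined when pi o f is
  differentiable on C, which is made explicit.\<close>
definition Sens ::
  "('m::topological_space set \<times> ('m \<Rightarrow> 'e::euclidean_space)) set \<Rightarrow> (real, 'n::{finite,linorder}) vec set \<Rightarrow> ((real, 'n) vec \<Rightarrow> 'm) \<Rightarrow> ('n \<Rightarrow> int) set" where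
  "Sens A C f = {v \<in> S_set. \<exists>p. diff_on_mfd A p \<and> (\<forall>c\<in>C. (p \<circ> f) differentiable (at c)) \<and>
                              eliminates (total_sign C (p \<circ> f)) v}"

end

theory Submission
  imports Defs
begin

text \<open>Suppose \<open>f x = f y\<close> with \<open>x \<noteq> y\<close>, and let \<open>d = y - x\<close>. Normalising the sign vector of \<open>d\<close>
  so that its first nonzero entry is \<open>1\<close> gives an element \<open>s\<close> of \<open>S_n\<close>, hence some \<open>\<pi>\<close> whose
  total sign over \<open>C\<close> eliminates \<open>s\<close>. Elimination says exactly that every summand of
  \<open>\<Sum>\<^sub>i d\<^sub>i \<partial>\<^sub>i(\<pi> \<circ> f)\<close> has one common sign, strictly for at least one \<open>i\<close>, so the derivative of
  \<open>\<pi> \<circ> f\<close> in direction \<open>d\<close> never vanishes on \<open>C\<close>. By convexity and the mean value theorem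
  along the segment from \<open>x\<close> to \<open>y\<close>, \<open>\<pi> (f x) \<noteq> \<pi> (f y)\<close>, a contradiction.\<close>

lemma frechet_derivative_eq_sum_partial:
  fixes g :: "real^'n \<Rightarrow> real"
  assumes "g differentiable (at c)"
  shows "frechet_derivative g (at c) d = (\<Sum>i\<in>UNIV. d$i * partial g i c)"
proof -
  have lin: "linear (frechet_derivative g (at c))"
    using assms frechet_derivative_works has_derivative_linear by blast
  have "frechet_derivative g (at c) d = frechet_derivative g (at c) (\<Sum>i\<in>UNIV. d$i *\<^sub>R axis i 1)"
    using basis_expansion[of d] by (simp add: scalar_mult_eq_scaleR)
  also have "\<dots> = (\<Sum>i\<in>UNIV. d$i * frechet_derivative g (at c) (axis i 1))"
    by (simp add: linear_sum[OF lin] linear_scale[OF lin])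
  finally show ?thesis by (simp add: partial_def)
qed

lemma neq_if_directional_derivative_nonzero_on_segment:
  fixes g :: "'a::real_normed_vector \<Rightarrow> real"
  assumes diff: "\<And>c. c \<in> closed_segment x y \<Longrightarrow> g differentiable (at c)"
    and nonzero: "\<And>c. c \<in> closed_segment x y \<Longrightarrow> frechet_derivative g (at c) (y - x) \<noteq> 0"
  shows "g x \<noteq> g y"
proof -
  define \<gamma> where "\<gamma> z = x + z *\<^sub>R (y - x)" for z :: real
  have \<gamma>_segment: "\<gamma> z \<in> closed_segment x y" if "0 \<le> z" "z \<le> 1" for z
    unfolding \<gamma>_def in_segment(1) using that by (intro exI[of _ z]) (simp add: algebra_simps)
  have der: "((g \<circ> \<gamma>) has_derivative (\<lambda>w. frechet_derivative g (at (\<gamma> z)) (w *\<^sub>R (y - x))))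
          (at z within {0..1})" if "0 \<le> z" "z \<le> 1" for z
  proof -
    have "(\<gamma> has_derivative (\<lambda>w. w *\<^sub>R (y - x))) (at z)"
      unfolding \<gamma>_def by (auto intro!: derivative_eq_intros)
    moreover have "(g has_derivative frechet_derivative g (at (\<gamma> z))) (at (\<gamma> z))"
      using diff[OF \<gamma>_segment[OF that]] frechet_derivative_works by blast
    ultimately have "((\<lambda>w. g (\<gamma> w)) has_derivative
        (\<lambda>w. frechet_derivative g (at (\<gamma> z)) (w *\<^sub>R (y - x)))) (at z)"
      by (rule has_derivative_compose)
    then show ?thesis
      unfolding comp_def by (rule has_derivative_at_withinI)
  qed
  then obtain z where "z \<in> {0..1}"
    and "(g \<circ> \<gamma>) 1 - (g \<circ> \<gamma>) 0 = frechet_derivative g (at (\<gamma> z)) (y - x)"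
    using mvt_very_simple[of 0 1 "g \<circ> \<gamma>", OF _ der] by auto
  moreover have "(g \<circ> \<gamma>) 1 - (g \<circ> \<gamma>) 0 = g y - g x"
    by (simp add: \<gamma>_def)
  ultimately show ?thesis
    using nonzero[OF \<gamma>_segment] by auto
qed

lemma sign_on_mult_pos:
  assumes "c \<in> C" "sign_on C h = sgnu_of_int m" "m \<noteq> 0"
  shows "0 < of_int m * h c"
  using assms unfolding sign_on_def sgnu_of_int_def
  by (auto split: if_splits simp: zero_less_mult_iff)

lemma eliminates_total_sign_imp_constant_sign:
  fixes g :: "real^'n \<Rightarrow> real"
  assumes elim: "eliminates (total_sign C g) s"
    and weights: "\<And>i. s i \<noteq> 0 \<Longrightarrow> 0 < a i"
  shows "\<exists>k\<in>{1, -1::int}. \<forall>c\<in>C. 0 < of_int k * (\<Sum>i\<in>UNIV. of_int (s i) * a i * partial g i c)"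
proof -
  let ?t = "total_sign C g"
  obtain i0 where i0: "?t i0 \<noteq> Zero" "s i0 \<noteq> 0"
    using elim unfolding eliminates_def by blast
  obtain k :: int where k: "k \<in> {1, -1}"
    and signs: "\<And>i. s i \<noteq> 0 \<Longrightarrow> ?t i \<noteq> Zero \<Longrightarrow> ?t i = sgnu_of_int (k * s i)"
    using elim unfolding eliminates_def by blast
  have "0 < of_int k * (\<Sum>i\<in>UNIV. of_int (s i) * a i * partial g i c)" if c: "c \<in> C" for c
  proof -
    have term_pos: "0 < of_int k * (of_int (s i) * a i * partial g i c)"
      if "s i \<noteq> 0" "?t i \<noteq> Zero" for i
    proof -
      have "sign_on C (partial g i) = sgnu_of_int (k * s i)"
        using signs[OF that] unfolding total_sign_def by simp
      moreover have "k * s i \<noteq> 0"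
        using k \<open>s i \<noteq> 0\<close> by auto
      ultimately have "0 < of_int (k * s i) * partial g i c"
        by (rule sign_on_mult_pos[OF c])
      with weights[OF \<open>s i \<noteq> 0\<close>] have "0 < a i * (of_int (k * s i) * partial g i c)"
        by (rule mult_pos_pos)
      then show ?thesis
        by (simp add: mult_ac)
    qed
    have term_zero: "partial g i c = 0" if "?t i = Zero" for i
      using that c unfolding total_sign_def sign_on_def by (auto split: if_splits)
    have "0 < (\<Sum>i\<in>UNIV. of_int k * (of_int (s i) * a i * partial g i c))"
    proof (rule sum_pos2[of UNIV i0])
      show "0 < of_int k * (of_int (s i0) * a i0 * partial g i0 c)"
        using term_pos i0 by blast
      show "0 \<le> of_int k * (of_int (s i) * a i * partial g i c)" for i
        using term_pos[of i] term_zero[of i] by (cases "s i = 0"; cases "?t i = Zero") auto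
    qed auto
    then show ?thesis by (simp add: sum_distrib_left)
  qed
  then show ?thesis using k by blast
qed

definition lead_index :: "real^'n::{finite,linorder} \<Rightarrow> 'n" where
  "lead_index d = Min {i. d$i \<noteq> 0}"

definition sign_pattern :: "real^'n::{finite,linorder} \<Rightarrow> 'n \<Rightarrow> int" where
  "sign_pattern d i =
     (if d$i = 0 then 0 else if sgn (d$i) = sgn (d $ lead_index d) then 1 else -1)"

lemma lead_index_nonzero:
  assumes "d \<noteq> 0"
  shows "d $ lead_index d \<noteq> 0"
proof -
  have "{i. d$i \<noteq> 0} \<noteq> {}"
    using assms by (auto simp: vec_eq_iff)
  then show ?thesis
    unfolding lead_index_def using Min_in[of "{i. d$i \<noteq> 0}"] by auto
qed

lemma lead_index_le: "d$i \<noteq> 0 \<Longrightarrow> lead_index d \<le> i"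
  unfolding lead_index_def by (rule Min_le) auto

lemma sign_pattern_eq_0_iff: "sign_pattern d i = 0 \<longleftrightarrow> d$i = 0"
  by (simp add: sign_pattern_def)

lemma sign_pattern_in_S_set:
  assumes "d \<noteq> 0"
  shows "sign_pattern d \<in> S_set"
  unfolding S_set_def
proof (intro CollectI conjI allI impI)
  show "sign_pattern d i \<in> {-1, 0, 1}" for i
    by (simp add: sign_pattern_def)
  show "\<exists>i. sign_pattern d i \<noteq> 0"
    using lead_index_nonzero[OF assms] sign_pattern_eq_0_iff by blast
  fix i assume "sign_pattern d i \<noteq> 0 \<and> (\<forall>j. sign_pattern d j \<noteq> 0 \<longrightarrow> i \<le> j)"
  then have "i = lead_index d"
    using lead_index_nonzero[OF assms] lead_index_le[of d i] sign_pattern_eq_0_iff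
    by (metis order.antisym)
  then show "sign_pattern d i = 1"
    using lead_index_nonzero[OF assms] by (simp add: sign_pattern_def)
qed

lemma component_eq_sign_pattern:
  assumes "d \<noteq> 0"
  shows "d$i = sgn (d $ lead_index d) * (of_int (sign_pattern d i) * \<bar>d$i\<bar>)"
proof -
  have "of_int (sign_pattern d i) = sgn (d$i) * sgn (d $ lead_index d)"
    using lead_index_nonzero[OF assms] unfolding sign_pattern_def by (auto simp: sgn_if)
  moreover have "sgn (d $ lead_index d) * sgn (d $ lead_index d) = (1::real)"
    using lead_index_nonzero[OF assms] by (simp add: sgn_if)
  ultimately show ?thesis
    by (simp add: abs_mult_sgn mult_ac)
qed

lemma directional_derivative_nonzero_if_eliminates_sign_pattern:
  fixes g :: "real^'n::{finite,linorder} \<Rightarrow> real"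
  assumes "d \<noteq> 0"
    and elim: "eliminates (total_sign C g) (sign_pattern d)"
    and "c \<in> C" "g differentiable (at c)"
  shows "frechet_derivative g (at c) d \<noteq> 0"
proof -
  have "\<exists>k\<in>{1, -1::int}. \<forall>c\<in>C.
      0 < of_int k * (\<Sum>i\<in>UNIV. of_int (sign_pattern d i) * \<bar>d$i\<bar> * partial g i c)"
    using elim by (rule eliminates_total_sign_imp_constant_sign) (simp add: sign_pattern_eq_0_iff)
  then have sum_nonzero: "(\<Sum>i\<in>UNIV. of_int (sign_pattern d i) * \<bar>d$i\<bar> * partial g i c) \<noteq> 0"
    using \<open>c \<in> C\<close> by fastforce
  have "frechet_derivative g (at c) d = (\<Sum>i\<in>UNIV. d$i * partial g i c)"
    using \<open>g differentiable (at c)\<close> by (rule frechet_derivative_eq_sum_partial)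
  also have "\<dots> = sgn (d $ lead_index d) *
      (\<Sum>i\<in>UNIV. of_int (sign_pattern d i) * \<bar>d$i\<bar> * partial g i c)"
    unfolding sum_distrib_left
    using component_eq_sign_pattern[OF \<open>d \<noteq> 0\<close>] by (intro sum.cong refl) (metis mult.assoc)
  finally show ?thesis
    using sum_nonzero lead_index_nonzero[OF \<open>d \<noteq> 0\<close>] by (simp add: sgn_eq_0_iff)
qed

theorem theorem3p1:
  fixes A :: "('m::{t2_space,second_countable_topology} set \<times> ('m \<Rightarrow> 'e::euclidean_space)) set"
    and C :: "(real, 'n::{finite,linorder}) vec set"
    and f :: "(real, 'n) vec \<Rightarrow> 'm"
  assumes "smooth_atlas A"
    and "convex C"
    and "diff_into_mfd A f"
    and "Sens A C f = S_set"
  shows "inj_on f C"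
proof (rule inj_onI, rule ccontr)
  fix x y assume "x \<in> C" "y \<in> C" "f x = f y" "x \<noteq> y"
  then have "y - x \<noteq> 0" by simp
  then obtain p where diff: "\<forall>c\<in>C. (p \<circ> f) differentiable (at c)"
    and elim: "eliminates (total_sign C (p \<circ> f)) (sign_pattern (y - x))"
    using sign_pattern_in_S_set assms(4) unfolding Sens_def by blast
  have segment: "closed_segment x y \<subseteq> C"
    using \<open>x \<in> C\<close> \<open>y \<in> C\<close> assms(2) by (rule closed_segment_subset)
  have "frechet_derivative (p \<circ> f) (at c) (y - x) \<noteq> 0" if "c \<in> closed_segment x y" for c
    using directional_derivative_nonzero_if_eliminates_sign_pattern[OF \<open>y - x \<noteq> 0\<close> elim]
      that segment diff by blast
  then have "(p \<circ> f) x \<noteq> (p \<circ> f) y"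
    using diff segment neq_if_directional_derivative_nonzero_on_segment[of x y "p \<circ> f"] by blast
  then show False using \<open>f x = f y\<close> by simp
qed

end
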